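(* Let $g\ge1$, $\alpha,\alpha_1,\dots,\alpha_{2g-1}\in\mathbb C$, $f_{g-1}(x)=\prod_{j=1}^{2g-1}(x-\alpha_j)=\sum_{i=0}^{2g-1}\tilde\mu_{4g-2-2i}x^i$ and $f_g(x)=(x-\alpha)^2f_{g-1}(x)=\sum_{i=0}^{2g+1}\mu_{4g+2-2i}x^i$ (with coefficients of indices outside these ranges set to $0$). Put $H_g(x_1,x_2)=\sum_{i=0}^g(x_1x_2)^i(2\mu_{4g+2-4i}+\mu_{4g-4i}(x_1+x_2))$ and $H_{g-1}(x_1,x_2)=\sum_{i=0}^{g-1}(x_1x_2)^i(2\tilde\mu_{4g-2-4i}+\tilde\mu_{4g-4-4i}(x_1+x_2))$. Then $$H_g(x_1,x_2)=(x_1-\alpha)(x_2-\alpha)H_{g-1}(x_1,x_2)+\alpha(x_1-x_2)^2\sum_{i=0}^{g-1}\tilde\mu_{4g-4-4i}x_1^ix_2^i.$$ *)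

theory Defs
  imports "HOL-Analysis.Analysis" "HOL-Computational_Algebra.Polynomial"
begin

text \<open>Coefficient labelling of the paper: for a polynomial f of degree d = 2m+1,
  f(x) = sum_{i=0}^{d} mu_{2d - 2i} x^i, i.e. mu_k = coeff f ((2d - k)/2) for even k
  with 0 <= k <= 2d, and mu_k = 0 for all other integer indices k.\<close>
definition mu_coeff :: "complex poly \<Rightarrow> nat \<Rightarrow> int \<Rightarrow> complex" where
  "mu_coeff f d k = (if 0 \<le> k \<and> k \<le> 2 * int d \<and> even k
                       then coeff f (nat ((2 * int d - k) div 2)) else 0)"

end

theory Submission
  imports Defs
begin

text \<open>Write p = x1 x2 and s = x1 + x2, so that (x1 - a)(x2 - a) = p - a s + a^2
  and (x1 - x2)^2 = s^2 - 4p. Multiplying f by (x - a)^2 turns its coefficients c(k)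
  into c(k-2) - 2a c(k-1) + a^2 c(k); substituting this into H and regrouping by the
  coefficients of f gives the identity up to a boundary term, by induction on the
  number of summands. The boundary term only involves coefficients of f above its
  degree, so it vanishes.\<close>

text \<open>The paper's H, indexed by the coefficients of f instead of by the \<mu>-labels.\<close>
definition paired_coeff_sum :: "'a::comm_ring_1 poly \<Rightarrow> nat \<Rightarrow> 'a \<Rightarrow> 'a \<Rightarrow> 'a" where
  "paired_coeff_sum f n p s = (\<Sum>i<n. p^i * (2 * coeff f (2*i) + coeff f (2*i+1) * s))"

lemma mu_coeff_eq_coeff:
  assumes "k \<le> d"
  shows "mu_coeff f d (2 * int d - 2 * int k) = coeff f k"
  using assms unfolding mu_coeff_def by (simp add: nat_diff_distrib)

lemma coeff_linear_square_mult:
  fixes a :: "'a::comm_ring_1"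
  shows "coeff ([:-a, 1:]^2 * f) 0 = a^2 * coeff f 0"
    and "coeff ([:-a, 1:]^2 * f) 1 = a^2 * coeff f 1 - 2 * a * coeff f 0"
    and "coeff ([:-a, 1:]^2 * f) (Suc (Suc k)) =
           coeff f k - 2 * a * coeff f (k+1) + a^2 * coeff f (k+2)"
proof -
  have "[:-a, 1:]^2 * f = smult (a^2) f + pCons 0 (smult (-2 * a) f + pCons 0 f)"
    by (simp add: power2_eq_square algebra_simps)
  then show "coeff ([:-a, 1:]^2 * f) 0 = a^2 * coeff f 0"
    and "coeff ([:-a, 1:]^2 * f) 1 = a^2 * coeff f 1 - 2 * a * coeff f 0"
    and "coeff ([:-a, 1:]^2 * f) (Suc (Suc k)) =
           coeff f k - 2 * a * coeff f (k+1) + a^2 * coeff f (k+2)"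
    by (simp_all add: coeff_pCons)
qed

lemma paired_coeff_sum_linear_square_mult:
  fixes a :: "'a::comm_ring_1"
  shows "paired_coeff_sum ([:-a, 1:]^2 * f) (Suc n) p s =
           (p - a * s + a^2) * paired_coeff_sum f n p s
           + a * (s^2 - 4 * p) * (\<Sum>i<n. coeff f (2*i+1) * p^i)
           + p^n * (2 * a^2 * coeff f (2*n) + s * (a^2 * coeff f (2*n+1) - 2 * a * coeff f (2*n)))"
proof (induction n)
  case 0
  have "coeff ([:-a, 1:]^2 * f) (Suc 0) = a^2 * coeff f 1 - 2 * a * coeff f 0"
    using coeff_linear_square_mult(2) by simp
  then show ?case
    by (simp add: paired_coeff_sum_def coeff_linear_square_mult(1))
next
  case (Suc n)
  have even: "coeff ([:-a, 1:]^2 * f) (2 * Suc n) =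
                coeff f (2*n) - 2 * a * coeff f (2*n+1) + a^2 * coeff f (2*n+2)"
    using coeff_linear_square_mult(3)[of a f "2*n"] by (simp add: numeral_2_eq_2)
  have odd: "coeff ([:-a, 1:]^2 * f) (2 * Suc n + 1) =
               coeff f (2*n+1) - 2 * a * coeff f (2*n+2) + a^2 * coeff f (2*n+3)"
    using coeff_linear_square_mult(3)[of a f "2*n+1"] by (simp add: numeral_2_eq_2 numeral_3_eq_3)
  have "paired_coeff_sum ([:-a, 1:]^2 * f) (Suc (Suc n)) p s =
          paired_coeff_sum ([:-a, 1:]^2 * f) (Suc n) p s
          + p^Suc n * (2 * coeff ([:-a, 1:]^2 * f) (2 * Suc n)
                       + coeff ([:-a, 1:]^2 * f) (2 * Suc n + 1) * s)"
    by (simp add: paired_coeff_sum_def)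
  then show ?case
    unfolding Suc even odd
    by (simp add: paired_coeff_sum_def algebra_simps power2_eq_square numeral_3_eq_3)
qed

lemma paired_coeff_sum_linear_square_mult_degree:
  fixes a :: "'a::comm_ring_1"
  assumes "degree f < 2 * n"
  shows "paired_coeff_sum ([:-a, 1:]^2 * f) (Suc n) p s =
           (p - a * s + a^2) * paired_coeff_sum f n p s
           + a * (s^2 - 4 * p) * (\<Sum>i<n. coeff f (2*i+1) * p^i)"
  using assms by (simp add: paired_coeff_sum_linear_square_mult coeff_eq_0)

lemma degree_prod_linear_le:
  "degree (\<Prod>j\<in>A. [:- b j, 1:]) \<le> card A"
  using degree_prod_sum_le[of A "\<lambda>j. [:- b j, 1:]"] by (cases "finite A") simp_all

theorem lemma10:
  fixes g :: nat and \<alpha> :: complex and \<alpha>s :: "nat \<Rightarrow> complex"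
    and x1 x2 :: complex
  assumes "g \<ge> 1"
  defines "fg1 \<equiv> (\<Prod>j = 1..2*g-1. [:- \<alpha>s j, 1:])"
  defines "fg \<equiv> [:- \<alpha>, 1:]^2 * fg1"
  defines "mu \<equiv> mu_coeff fg (2*g+1)"
  defines "mut \<equiv> mu_coeff fg1 (2*g-1)"
  defines "Hg \<equiv> (\<Sum>i = 0..g. (x1*x2)^i *
              (2 * mu (4*int g + 2 - 4*int i) + mu (4*int g - 4*int i) * (x1 + x2)))"
  defines "Hg1 \<equiv> (\<Sum>i = 0..g-1. (x1*x2)^i *
              (2 * mut (4*int g - 2 - 4*int i) + mut (4*int g - 4 - 4*int i) * (x1 + x2)))"
  shows "Hg = (x1 - \<alpha>) * (x2 - \<alpha>) * Hg1
              + \<alpha> * (x1 - x2)^2 * (\<Sum>i = 0..g-1. mut (4*int g - 4 - 4*int i) * x1^i * x2^i)"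
proof -
  have range: "{0..g-1} = {..<g}" using assms(1) by auto
  have deg: "degree fg1 < 2 * g"
    using degree_prod_linear_le[of \<alpha>s "{1..2*g-1}"] assms(1) unfolding fg1_def by simp
  have mu: "mu (4*int g + 2 - 4*int i) = coeff fg (2*i)"
           "mu (4*int g - 4*int i) = coeff fg (2*i+1)" if "i \<le> g" for i
    using that mu_coeff_eq_coeff[of "2*i" "2*g+1" fg] mu_coeff_eq_coeff[of "2*i+1" "2*g+1" fg]
    unfolding mu_def by (simp_all add: algebra_simps)
  have mut: "mut (4*int g - 2 - 4*int i) = coeff fg1 (2*i)"
            "mut (4*int g - 4 - 4*int i) = coeff fg1 (2*i+1)" if "i < g" for i
    using that assms(1) mu_coeff_eq_coeff[of "2*i" "2*g-1" fg1] mu_coeff_eq_coeff[of "2*i+1" "2*g-1" fg1]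
    unfolding mut_def by (simp_all add: algebra_simps of_nat_diff)
  have "Hg = paired_coeff_sum fg (Suc g) (x1*x2) (x1+x2)"
    unfolding Hg_def paired_coeff_sum_def atLeast0AtMost lessThan_Suc_atMost
    by (intro sum.cong) (simp_all add: mu)
  moreover have "Hg1 = paired_coeff_sum fg1 g (x1*x2) (x1+x2)"
    unfolding Hg1_def paired_coeff_sum_def range by (intro sum.cong) (simp_all add: mut)
  moreover have "(\<Sum>i = 0..g-1. mut (4*int g - 4 - 4*int i) * x1^i * x2^i) =
                   (\<Sum>i<g. coeff fg1 (2*i+1) * (x1*x2)^i)"
    unfolding range by (intro sum.cong) (simp_all add: mut power_mult_distrib)
  ultimately show ?thesis
    unfolding fg_def paired_coeff_sum_linear_square_mult_degree[OF deg]
    by (simp add: algebra_simps power2_eq_square)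
qed

end
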